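(* Let $k\ge3$, let $\{S_n\}$ be a perturbed sequence of weak shifts of degree $d$ corresponding to a uniformly bounded sequence of weak shift-like maps $\{\mathsf S_n\}$ of degree $\tilde d\le d-2$. Then there exists a sufficiently large $R>1$ such that \[U^+=\bigcup_{n\ge1} S(n)^{-1}\bigl(\operatorname{int} V_R^k\bigr)\quad\text{and}\quad U^-=\bigcup_{n\ge1}\bigl(S^{-1}(n)\bigr)^{-1}\bigl(\operatorname{int} V_R^-\bigr).\]
   Context: Let $Q_m(z)=z^m$ and $\mathbf H_d(w_1,\dots,w_{k-1})=\sum_{i=1}^{k-1}w_i^d$. A sequence $\{\mathsf S_n\}$ of maps $\mathsf S_n(z_1,\dots,z_k)=(z_2,\dots,z_k,\ a_nz_1+p_n(z_2,\dots,z_k))$ is a uniformly bounded sequence of weak shift-like maps of degree $\tilde d\ge1$ if each $a_nz_1+p_n$ has degree $\tilde d$, $p_n(\mathbf z)=\sum_{i\in I}\alpha_{i,n}\mathbf z^i$ with $I$ the multi-indices in $\mathbb{N}_0^{k-1}$ of total degree $\le\tilde d$, and there are constants $\tilde m,\tilde M>0$ with $\tilde m<|a_n|<\tilde M$ and $|\alpha_{i,n}|<\tilde M$ for all $n,i$. For $d\ge\tilde d+2$ the associated perturbed sequence of weak shifts of degree $d$ is \[S_n(z)=\mathsf S_n(z)+\bigl(0,\dots,0,Q_{d-1}(z_2),\mathbf H_d(z_2,\dots,z_k)\bigr),\] i.e. $S_n(z)=(z_2,\dots,z_{k-1},z_k+z_2^{d-1},a_nz_1+p_n(z_2,\dots,z_k)+\sum_{i=2}^k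 z_i^d)$; these are polynomial automorphisms of $\mathbb{C}^k$. Write $S(n)=S_n\circ\cdots\circ S_1$ and $S^{-1}(n)=S_n^{-1}\circ\cdots\circ S_1^{-1}$, and $\overline{F}$ for the extension of a polynomial map to $\mathbb{P}^k$, with $z\in\mathbb{C}^k$ identified with $[z:1]$. Let $X^+=[0:\cdots:0:1:0]$ (the $k$-th homogeneous coordinate equal to 1) and $X^-=[1:0:\cdots:0]$. Define $U^+=\{z\in\mathbb{C}^k:\overline{S(n)}([z:1])\to X^+\}$ and $U^-=\{z\in\mathbb{C}^k:\overline{S^{-1}(n)}([z:1])\to X^-\}$. For $R>0$, $V_R^k=\{z:|z_k|\ge\max\{(k-1)|z_1|,\dots,(k-1)|z_{k-1}|,R\}\}$ and $V_R^-=\{z:|z_1|\ge\max\{(k-1)|z_2|,\dots,(k-1)|z_k|,R\}\}$. *)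

theory Defs
  imports "HOL-Analysis.Analysis"
begin

text \<open>Points of C^k are represented as functions nat => complex whose coordinates
  are z 1, ..., z k; all other coordinates are 0.\<close>
definition Ck :: "nat \<Rightarrow> (nat \<Rightarrow> complex) set" where
  "Ck k = {z. \<forall>i. i \<notin> {1..k} \<longrightarrow> z i = 0}"

definition midx :: "nat \<Rightarrow> nat \<Rightarrow> (nat \<Rightarrow> nat) set" where
  "midx k dt = {i. (\<forall>j. j \<notin> {2..k} \<longrightarrow> i j = 0) \<and> sum i {2..k} \<le> dt}"

definition pn :: "nat \<Rightarrow> nat \<Rightarrow> (nat \<Rightarrow> (nat \<Rightarrow> nat) \<Rightarrow> complex) \<Rightarrow> nat
    \<Rightarrow> (nat \<Rightarrow> complex) \<Rightarrow> complex" where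
  "pn k dt \<alpha> n z = (\<Sum>i\<in>midx k dt. \<alpha> n i * (\<Prod>j=2..k. z j ^ i j))"

definition last_deg :: "nat \<Rightarrow> nat \<Rightarrow> (nat \<Rightarrow> complex) \<Rightarrow> (nat \<Rightarrow> (nat \<Rightarrow> nat) \<Rightarrow> complex)
    \<Rightarrow> nat \<Rightarrow> nat" where
  "last_deg k dt a \<alpha> n =
     Max ((if a n \<noteq> 0 then {1} else {}) \<union>
          {sum i {2..k} | i. i \<in> midx k dt \<and> \<alpha> n i \<noteq> 0})"

definition unif_bdd_weak_shift_like ::
  "nat \<Rightarrow> nat \<Rightarrow> (nat \<Rightarrow> complex) \<Rightarrow> (nat \<Rightarrow> (nat \<Rightarrow> nat) \<Rightarrow> complex) \<Rightarrow> bool" where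
  "unif_bdd_weak_shift_like k dt a \<alpha> \<longleftrightarrow>
     1 \<le> dt \<and>
     (\<forall>n\<ge>1. last_deg k dt a \<alpha> n = dt) \<and>
     (\<exists>mt Mt :: real. 0 < mt \<and> 0 < Mt \<and>
        (\<forall>n\<ge>1. mt < cmod (a n) \<and> cmod (a n) < Mt \<and>
                 (\<forall>i\<in>midx k dt. cmod (\<alpha> n i) < Mt)))"

definition Sn :: "nat \<Rightarrow> nat \<Rightarrow> nat \<Rightarrow> (nat \<Rightarrow> complex) \<Rightarrow> (nat \<Rightarrow> (nat \<Rightarrow> nat) \<Rightarrow> complex)
    \<Rightarrow> nat \<Rightarrow> (nat \<Rightarrow> complex) \<Rightarrow> (nat \<Rightarrow> complex)" where
  "Sn k d dt a \<alpha> n z = (\<lambda>j.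
     if j \<in> {1..k-2} then z (j+1)
     else if j = k - 1 then z k + z 2 ^ (d - 1)
     else if j = k then a n * z 1 + pn k dt \<alpha> n z + (\<Sum>i=2..k. z i ^ d)
     else 0)"

primrec Scomp :: "nat \<Rightarrow> nat \<Rightarrow> nat \<Rightarrow> (nat \<Rightarrow> complex) \<Rightarrow> (nat \<Rightarrow> (nat \<Rightarrow> nat) \<Rightarrow> complex)
    \<Rightarrow> nat \<Rightarrow> (nat \<Rightarrow> complex) \<Rightarrow> (nat \<Rightarrow> complex)" where
  "Scomp k d dt a \<alpha> 0 = id"
| "Scomp k d dt a \<alpha> (Suc n) = Sn k d dt a \<alpha> (Suc n) \<circ> Scomp k d dt a \<alpha> n"

primrec Sinvcomp :: "nat \<Rightarrow> nat \<Rightarrow> nat \<Rightarrow> (nat \<Rightarrow> complex) \<Rightarrow> (nat \<Rightarrow> (nat \<Rightarrow> nat) \<Rightarrow> complex)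
    \<Rightarrow> nat \<Rightarrow> (nat \<Rightarrow> complex) \<Rightarrow> (nat \<Rightarrow> complex)" where
  "Sinvcomp k d dt a \<alpha> 0 = id"
| "Sinvcomp k d dt a \<alpha> (Suc n) =
     the_inv_into (Ck k) (Sn k d dt a \<alpha> (Suc n)) \<circ> Sinvcomp k d dt a \<alpha> n"

text \<open>Homogeneous coordinates: points of P^k are given by vectors with coordinates
  1..k+1; z in C^k is identified with [z:1].\<close>
definition hom1 :: "nat \<Rightarrow> (nat \<Rightarrow> complex) \<Rightarrow> (nat \<Rightarrow> complex)" where
  "hom1 k z = z(k+1 := 1)"

text \<open>Convergence [v n] -> [x] in P^k, via an affine chart {w_j \<noteq> 0} with x j \<noteq> 0.\<close>
definition proj_tendsto :: "nat \<Rightarrow> (nat \<Rightarrow> nat \<Rightarrow> complex) \<Rightarrow> (nat \<Rightarrow> complex) \<Rightarrow> bool" where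
  "proj_tendsto k v x \<longleftrightarrow>
     (\<exists>j\<in>{1..k+1}. x j \<noteq> 0 \<and> (\<forall>\<^sub>F n in sequentially. v n j \<noteq> 0) \<and>
        (\<forall>i\<in>{1..k+1}. (\<lambda>n. v n i / v n j) \<longlonglongrightarrow> x i / x j))"

definition Xplus :: "nat \<Rightarrow> nat \<Rightarrow> complex" where
  "Xplus k = (\<lambda>i. if i = k then 1 else 0)"

definition Xminus :: "nat \<Rightarrow> complex" where
  "Xminus = (\<lambda>i. if i = 1 then 1 else 0)"

definition Uplus :: "nat \<Rightarrow> nat \<Rightarrow> nat \<Rightarrow> (nat \<Rightarrow> complex) \<Rightarrow> (nat \<Rightarrow> (nat \<Rightarrow> nat) \<Rightarrow> complex)
    \<Rightarrow> (nat \<Rightarrow> complex) set" where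
  "Uplus k d dt a \<alpha> = {z \<in> Ck k.
     proj_tendsto k (\<lambda>n. hom1 k (Scomp k d dt a \<alpha> n z)) (Xplus k)}"

definition Uminus :: "nat \<Rightarrow> nat \<Rightarrow> nat \<Rightarrow> (nat \<Rightarrow> complex) \<Rightarrow> (nat \<Rightarrow> (nat \<Rightarrow> nat) \<Rightarrow> complex)
    \<Rightarrow> (nat \<Rightarrow> complex) set" where
  "Uminus k d dt a \<alpha> = {z \<in> Ck k.
     proj_tendsto k (\<lambda>n. hom1 k (Sinvcomp k d dt a \<alpha> n z)) Xminus}"

definition VRk :: "nat \<Rightarrow> real \<Rightarrow> (nat \<Rightarrow> complex) set" where
  "VRk k R = {z \<in> Ck k. (\<forall>j\<in>{1..k-1}. real (k-1) * cmod (z j) \<le> cmod (z k)) \<and> R \<le> cmod (z k)}"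

definition VRminus :: "nat \<Rightarrow> real \<Rightarrow> (nat \<Rightarrow> complex) set" where
  "VRminus k R = {z \<in> Ck k. (\<forall>j\<in>{2..k}. real (k-1) * cmod (z j) \<le> cmod (z 1)) \<and> R \<le> cmod (z 1)}"

text \<open>Interior taken in C^k (relative to the subspace Ck k of the product topology).\<close>
definition intCk :: "nat \<Rightarrow> (nat \<Rightarrow> complex) set \<Rightarrow> (nat \<Rightarrow> complex) set" where
  "intCk k V = (subtopology euclidean (Ck k)) interior_of V"

end

theory Submission
  imports Defs
begin

text \<open>Far from the origin each \<open>S\<^sub>n\<close> is dominated by its terms of top degree. On
  \<open>V\<^sub>R\<^sup>k\<close> the last coordinate is raised to the power \<open>d\<close> while all others grow at
  most like its \<open>(d-1)\<close>-st power, so \<open>|z\<^sub>k|\<close> at least doubles and the ratios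
  \<open>|z\<^sub>j|/|z\<^sub>k|\<close> become \<open>O(1/|z\<^sub>k|)\<close>; in particular \<open>V\<^sub>R\<^sup>k\<close> is forward invariant.
  Symmetrically, if \<open>w \<in> V\<^sub>R\<^sup>-\<close> and \<open>z = S\<^sub>n\<^sup>-\<^sup>1(w)\<close>, then \<open>z\<^sub>k = w\<^sub>k\<^sub>-\<^sub>1 - w\<^sub>1\<^sup>d\<^sup>-\<^sup>1\<close>
  is of order \<open>|w\<^sub>1|\<^sup>d\<^sup>-\<^sup>1\<close>, the other \<open>z\<^sub>j\<close> with \<open>j \<ge> 2\<close> are at most \<open>|w\<^sub>1|\<close>, and
  \<open>a\<^sub>n z\<^sub>1\<close> has to balance \<open>z\<^sub>k\<^sup>d\<close>, so the first coordinate dominates even more strongly.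
  Hence an orbit that enters the interior of the region converges to the corresponding point
  at infinity. Conversely, an orbit converging to that point eventually satisfies the defining
  inequalities of the region strictly, so it lies in the interior.\<close>

section \<open>Escape regions and convergence to a coordinate point at infinity\<close>

definition escape_region :: "nat \<Rightarrow> nat \<Rightarrow> real \<Rightarrow> real \<Rightarrow> (nat \<Rightarrow> complex) set" where
  "escape_region k c K R =
     {z \<in> Ck k. (\<forall>j\<in>{1..k}-{c}. K * cmod (z j) \<le> cmod (z c)) \<and> R \<le> cmod (z c)}"

lemma escape_region_coord_le:
  assumes "z \<in> escape_region k c K R" and "1 \<le> K" and "j \<in> {1..k}"
  shows "cmod (z j) \<le> cmod (z c)"
proof (cases "j = c")
  case False
  with assms have "K * cmod (z j) \<le> cmod (z c)" unfolding escape_region_def by blast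
  moreover have "cmod (z j) \<le> K * cmod (z j)" using mult_right_mono[OF assms(2) norm_ge_zero] by simp
  ultimately show ?thesis by linarith
qed simp

lemma VRk_eq_escape_region: "VRk k R = escape_region k k (real (k-1)) R"
proof -
  have "{1..k-1} = {1..k}-{k}" by auto
  then show ?thesis unfolding VRk_def escape_region_def by simp
qed

lemma VRminus_eq_escape_region: "VRminus k R = escape_region k 1 (real (k-1)) R"
proof -
  have "{2..k} = {1..k}-{1}" by auto
  then show ?thesis unfolding VRminus_def escape_region_def by simp
qed

lemma in_interior_escape_region:
  assumes "z \<in> Ck k" "\<forall>j\<in>{1..k}-{c}. K * cmod (z j) < cmod (z c)" "R < cmod (z c)"
  shows "z \<in> intCk k (escape_region k c K R)"
proof -
  define U where "U = (\<Inter>j\<in>{1..k}-{c}. {w. K * cmod (w j) < cmod (w c)}) \<inter> {w. R < cmod (w c)}"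
  have coord: "continuous_on UNIV (\<lambda>w::nat\<Rightarrow>complex. cmod (w i))" for i
    by (intro continuous_intros) simp
  have "open {w::nat\<Rightarrow>complex. K * cmod (w j) < cmod (w c)}" for j
    by (rule open_Collect_less) (intro continuous_intros coord)+
  moreover have "open {w::nat\<Rightarrow>complex. R < cmod (w c)}"
    by (rule open_Collect_less) (intro continuous_intros coord)+
  ultimately have "open U" unfolding U_def by (intro open_Int open_INT) auto
  then have "openin (subtopology euclidean (Ck k)) (U \<inter> Ck k)"
    by (auto simp: openin_subtopology)
  moreover have "z \<in> U \<inter> Ck k" using assms unfolding U_def by auto
  moreover have "U \<inter> Ck k \<subseteq> escape_region k c K R"
    unfolding U_def escape_region_def by (auto intro: less_imp_le)
  ultimately show ?thesis unfolding intCk_def interior_of_def by blast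
qed

lemma hom1_apply: "hom1 k z i = (if i = k + 1 then 1 else z i)"
  unfolding hom1_def by simp

lemma proj_tendsto_offset:
  assumes "proj_tendsto k (\<lambda>m. v (m + n)) x"
  shows "proj_tendsto k v x"
proof -
  obtain j where j: "j \<in> {1..k+1}" "x j \<noteq> 0" "\<forall>\<^sub>F m in sequentially. v (m + n) j \<noteq> 0"
    "\<forall>i\<in>{1..k+1}. (\<lambda>m. v (m + n) i / v (m + n) j) \<longlonglongrightarrow> x i / x j"
    using assms unfolding proj_tendsto_def by blast
  have "\<forall>\<^sub>F m in sequentially. v m j \<noteq> 0"
    using j(3) eventually_sequentially_seg[of "\<lambda>m. v m j \<noteq> 0" n] by simp
  moreover have "\<forall>i\<in>{1..k+1}. (\<lambda>m. v m i / v m j) \<longlonglongrightarrow> x i / x j"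
    using j(4) LIMSEQ_offset[of "\<lambda>m. v m _ / v m j" n] by blast
  ultimately show ?thesis unfolding proj_tendsto_def using j(1,2) by blast
qed

lemma const_divide_norm_LIMSEQ_zero_if_doubling:
  fixes u :: "nat \<Rightarrow> 'a::real_normed_vector" and R C :: real
  assumes R: "0 < R" and lb: "\<And>m. R \<le> norm (u m)"
    and doubling: "\<And>m. 2 * norm (u m) \<le> norm (u (Suc m))"
  shows "(\<lambda>m. C / norm (u m)) \<longlonglongrightarrow> 0"
proof (rule Lim_null_comparison)
  have grow: "2 ^ m * R \<le> norm (u m)" for m
  proof (induction m)
    case 0
    show ?case using lb[of 0] by simp
  next
    case (Suc m)
    show ?case using Suc.IH doubling[of m] by simp
  qed
  have "norm (C / norm (u m)) \<le> \<bar>C\<bar> / R * (1/2) ^ m" for m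
  proof -
    have "0 < 2 ^ m * R" using R by simp
    with grow[of m] have "0 < norm (u m) * (2 ^ m * R)" by (meson less_le_trans mult_pos_pos)
    with grow[of m] have "\<bar>C\<bar> / norm (u m) \<le> \<bar>C\<bar> / (2 ^ m * R)"
      by (intro divide_left_mono) auto
    then show ?thesis by (simp add: power_one_over mult.commute)
  qed
  then show "\<forall>\<^sub>F m in sequentially. norm (C / norm (u m)) \<le> \<bar>C\<bar> / R * (1/2) ^ m" by simp
  show "(\<lambda>m. \<bar>C\<bar> / R * (1/2::real) ^ m) \<longlonglongrightarrow> 0"
    by (intro tendsto_mult_right_zero LIMSEQ_power_zero) simp
qed

lemma proj_tendsto_coordinate_point_if_dominant:
  fixes x :: "nat \<Rightarrow> nat \<Rightarrow> complex" and R B :: real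
  assumes c: "c \<in> {1..k}" and R: "0 < R"
    and lb: "\<And>m. R \<le> cmod (x m c)"
    and doubling: "\<And>m. 2 * cmod (x m c) \<le> cmod (x (Suc m) c)"
    and ratio: "\<And>m j. j \<in> {1..k}-{c} \<Longrightarrow> cmod (x (Suc m) j) \<le> B / cmod (x m c) * cmod (x (Suc m) c)"
  shows "proj_tendsto k (\<lambda>m. hom1 k (x m)) (\<lambda>i. if i = c then 1 else 0)"
proof -
  note decay = const_divide_norm_LIMSEQ_zero_if_doubling[where u="\<lambda>m. x m c", OF R lb doubling]
  have pos: "0 < cmod (x m c)" for m using lb[of m] R by linarith
  have "(\<lambda>m. norm (1 / x m c)) \<longlonglongrightarrow> 0" using decay[of 1] by (simp add: norm_divide)
  then have inv_lim: "(\<lambda>m. 1 / x m c) \<longlonglongrightarrow> 0" by (rule tendsto_norm_zero_cancel)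
  have ratio_lim: "(\<lambda>m. x m i / x m c) \<longlonglongrightarrow> 0" if i: "i \<in> {1..k}-{c}" for i
  proof -
    have "norm (x (Suc m) i / x (Suc m) c) \<le> B / cmod (x m c)" for m
      using ratio[OF i, of m] pos[of "Suc m"] by (simp add: norm_divide divide_le_eq)
    then have "\<forall>\<^sub>F m in sequentially. norm (x (Suc m) i / x (Suc m) c) \<le> B / cmod (x m c)"
      by simp
    from Lim_null_comparison[OF this decay]
    have "(\<lambda>m. x (Suc m) i / x (Suc m) c) \<longlonglongrightarrow> 0" .
    then show ?thesis by (rule LIMSEQ_imp_Suc)
  qed
  have ck: "c \<noteq> k + 1" using c by auto
  show ?thesis unfolding proj_tendsto_def
  proof (intro bexI[of _ c] conjI ballI)
    show "c \<in> {1..k+1}" using c by auto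
    show "(if c = c then 1 else 0) \<noteq> (0::complex)" by simp
    show "\<forall>\<^sub>F m in sequentially. hom1 k (x m) c \<noteq> 0" using pos ck by (simp add: hom1_apply)
    fix i assume "i \<in> {1..k+1}"
    then consider "i = c" | "i = k + 1" | "i \<in> {1..k}-{c}" by fastforce
    then show "(\<lambda>m. hom1 k (x m) i / hom1 k (x m) c) \<longlonglongrightarrow>
        (if i = c then 1 else 0) / (if c = c then 1 else 0)"
      by cases (use pos inv_lim ratio_lim ck in \<open>auto simp: hom1_apply\<close>)
  qed
qed

lemma eventually_in_interior_escape_region:
  fixes x :: "nat \<Rightarrow> nat \<Rightarrow> complex" and K R :: real
  assumes lim: "proj_tendsto k (\<lambda>m. hom1 k (x m)) (\<lambda>i. if i = c then 1 else 0)"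
    and c: "c \<in> {1..k}" and K: "0 \<le> K" and x: "\<And>m. x m \<in> Ck k"
  shows "\<forall>\<^sub>F m in sequentially. x m \<in> intCk k (escape_region k c K R)"
proof -
  have ck: "c \<noteq> k + 1" using c by auto
  obtain j where "j \<in> {1..k+1}" and j: "(if j = c then 1 else 0) \<noteq> (0::complex)"
    and nz: "\<forall>\<^sub>F m in sequentially. hom1 k (x m) j \<noteq> 0"
    and ratios: "\<forall>i\<in>{1..k+1}. (\<lambda>m. hom1 k (x m) i / hom1 k (x m) j) \<longlonglongrightarrow>
         (if i = c then 1 else 0) / (if j = c then 1 else 0)"
    using lim unfolding proj_tendsto_def by blast
  have jc: "j = c" using j by (auto split: if_splits)
  have inv_lim: "(\<lambda>m. 1 / x m c) \<longlonglongrightarrow> 0"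
    using ratios[rule_format, of "k+1"] jc ck by (simp add: hom1_apply)
  have ratio_lim: "(\<lambda>m. x m i / x m c) \<longlonglongrightarrow> 0" if "i \<in> {1..k}-{c}" for i
    using ratios[rule_format, of i] that jc ck by (simp add: hom1_apply)
  from nz have nz: "\<forall>\<^sub>F m in sequentially. x m c \<noteq> 0"
    using jc ck by (simp add: hom1_apply)
  have "\<forall>\<^sub>F m in sequentially. norm (1 / x m c) < 1 / (\<bar>R\<bar> + 1)"
    using tendstoD[OF inv_lim, of "1 / (\<bar>R\<bar> + 1)"] by simp
  moreover have "\<forall>\<^sub>F m in sequentially. \<forall>i\<in>{1..k}-{c}. norm (x m i / x m c) < 1 / (K + 1)"
  proof (intro eventually_ball_finite ballI)
    fix i assume "i \<in> {1..k}-{c}"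
    from tendstoD[OF ratio_lim[OF this], of "1 / (K + 1)"] K
    show "\<forall>\<^sub>F m in sequentially. norm (x m i / x m c) < 1 / (K + 1)" by simp
  qed simp
  ultimately show ?thesis
    using nz
  proof eventually_elim
    case (elim m)
    then have pos: "0 < cmod (x m c)" by simp
    have "\<forall>i\<in>{1..k}-{c}. K * cmod (x m i) < cmod (x m c)"
    proof
      fix i assume "i \<in> {1..k}-{c}"
      then have "(K + 1) * cmod (x m i) < cmod (x m c)"
        using elim pos K by (simp add: norm_divide field_simps)
      moreover have "K * cmod (x m i) \<le> (K + 1) * cmod (x m i)" by (simp add: mult_right_mono)
      ultimately show "K * cmod (x m i) < cmod (x m c)" by linarith
    qed
    moreover have "R < cmod (x m c)"
      using elim pos by (simp add: norm_divide field_simps)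
    ultimately show ?case by (intro in_interior_escape_region x)
  qed
qed

lemma proj_tendsto_if_orbit_in_escape_region:
  fixes x :: "nat \<Rightarrow> nat \<Rightarrow> complex" and K R B :: real
  assumes c: "c \<in> {1..k}" and R: "0 < R" and K: "0 \<le> K" and B: "0 \<le> B" and KB: "K * B \<le> R"
    and x: "\<And>m. x m \<in> Ck k" and x0: "x 0 \<in> escape_region k c K R"
    and step: "\<And>m. x m \<in> escape_region k c K R \<Longrightarrow>
      2 * cmod (x m c) \<le> cmod (x (Suc m) c) \<and>
      (\<forall>j\<in>{1..k}-{c}. cmod (x (Suc m) j) \<le> B / cmod (x m c) * cmod (x (Suc m) c))"
  shows "proj_tendsto k (\<lambda>m. hom1 k (x m)) (\<lambda>i. if i = c then 1 else 0)"
proof -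
  have region: "x m \<in> escape_region k c K R" for m
  proof (induction m)
    case 0
    show ?case by (rule x0)
  next
    case (Suc m)
    let ?r = "cmod (x m c)" and ?w = "x (Suc m)"
    have r: "R \<le> ?r" using Suc.IH unfolding escape_region_def by simp
    with R have r0: "0 < ?r" by linarith
    note st = step[OF Suc.IH]
    have "K * cmod (?w j) \<le> cmod (?w c)" if j: "j \<in> {1..k}-{c}" for j
    proof -
      have "K * cmod (?w j) \<le> K * (B / ?r * cmod (?w c))"
        using st j K by (intro mult_left_mono) auto
      also have "\<dots> = (K * B) / ?r * cmod (?w c)" by simp
      also have "\<dots> \<le> cmod (?w c)"
        using KB K B r r0 by (intro mult_left_le_one_le) auto
      finally show ?thesis .
    qed
    moreover have "R \<le> cmod (?w c)" using st r r0 by linarith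
    ultimately show ?case using x[of "Suc m"] unfolding escape_region_def by blast
  qed
  show ?thesis
  proof (rule proj_tendsto_coordinate_point_if_dominant[OF c R])
    fix m
    show "R \<le> cmod (x m c)" using region[of m] unfolding escape_region_def by simp
    show "2 * cmod (x m c) \<le> cmod (x (Suc m) c)" using step[OF region] by blast
    fix j assume "j \<in> {1..k}-{c}"
    then show "cmod (x (Suc m) j) \<le> B / cmod (x m c) * cmod (x (Suc m) c)"
      using step[OF region] by blast
  qed
qed

lemma basin_eq_Union_interior_escape_region:
  fixes orb F :: "nat \<Rightarrow> (nat \<Rightarrow> complex) \<Rightarrow> nat \<Rightarrow> complex" and K R B :: real
  assumes c: "c \<in> {1..k}" and R: "0 < R" and K: "0 \<le> K" and B: "0 \<le> B" and KB: "K * B \<le> R"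
    and orb_Ck: "\<And>n z. z \<in> Ck k \<Longrightarrow> orb n z \<in> Ck k"
    and orb_Suc: "\<And>n z. z \<in> Ck k \<Longrightarrow> orb (Suc n) z = F (Suc n) (orb n z)"
    and step: "\<And>n z. z \<in> escape_region k c K R \<Longrightarrow>
      2 * cmod (z c) \<le> cmod (F (Suc n) z c) \<and>
      (\<forall>j\<in>{1..k}-{c}. cmod (F (Suc n) z j) \<le> B / cmod (z c) * cmod (F (Suc n) z c))"
  shows "{z \<in> Ck k. proj_tendsto k (\<lambda>n. hom1 k (orb n z)) (\<lambda>i. if i = c then 1 else 0)} =
    (\<Union>n\<in>{1..}. {z \<in> Ck k. orb n z \<in> intCk k (escape_region k c K R)})"
proof (intro equalityI subsetI)
  fix z assume "z \<in> {z \<in> Ck k. proj_tendsto k (\<lambda>n. hom1 k (orb n z)) (\<lambda>i. if i = c then 1 else 0)}"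
  then have z: "z \<in> Ck k" and lim: "proj_tendsto k (\<lambda>n. hom1 k (orb n z)) (\<lambda>i. if i = c then 1 else 0)"
    by auto
  have "\<forall>\<^sub>F n in sequentially. orb n z \<in> intCk k (escape_region k c K R)"
    using eventually_in_interior_escape_region[OF lim c K orb_Ck[OF z]] .
  then obtain N where "\<And>n. N \<le> n \<Longrightarrow> orb n z \<in> intCk k (escape_region k c K R)"
    unfolding eventually_sequentially by blast
  then show "z \<in> (\<Union>n\<in>{1..}. {z \<in> Ck k. orb n z \<in> intCk k (escape_region k c K R)})"
    using z by (intro UN_I[of "Suc N"]) auto
next
  fix z assume "z \<in> (\<Union>n\<in>{1..}. {z \<in> Ck k. orb n z \<in> intCk k (escape_region k c K R)})"
  then obtain n where z: "z \<in> Ck k" and int: "orb n z \<in> intCk k (escape_region k c K R)"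
    by blast
  from int have start: "orb n z \<in> escape_region k c K R"
    unfolding intCk_def by (rule subsetD[OF interior_of_subset])
  have "proj_tendsto k (\<lambda>m. hom1 k (orb (m + n) z)) (\<lambda>i. if i = c then 1 else 0)"
  proof (rule proj_tendsto_if_orbit_in_escape_region[OF c R K B KB])
    show "orb (m + n) z \<in> Ck k" for m using orb_Ck[OF z] .
    show "orb (0 + n) z \<in> escape_region k c K R" using start by simp
  next
    fix m assume "orb (m + n) z \<in> escape_region k c K R"
    from step[OF this, of "m + n"] orb_Suc[OF z, of "m + n"]
    show "2 * cmod (orb (m + n) z c) \<le> cmod (orb (Suc m + n) z c) \<and>
      (\<forall>j\<in>{1..k}-{c}. cmod (orb (Suc m + n) z j) \<le> B / cmod (orb (m + n) z c) * cmod (orb (Suc m + n) z c))"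
      by simp
  qed
  then show "z \<in> {z \<in> Ck k. proj_tendsto k (\<lambda>n. hom1 k (orb n z)) (\<lambda>i. if i = c then 1 else 0)}"
    using z by (simp add: proj_tendsto_offset)
qed

section \<open>The maps \<open>S\<^sub>n\<close> and their inverses\<close>

lemma Sn_shift_coord: "j \<in> {1..k-2} \<Longrightarrow> Sn k d dt a \<alpha> n z j = z (j+1)"
  unfolding Sn_def by simp

lemma Sn_penultimate_coord:
  assumes "3 \<le> k" shows "Sn k d dt a \<alpha> n z (k-1) = z k + z 2 ^ (d-1)"
  using assms unfolding Sn_def by auto

lemma Sn_last_coord:
  assumes "3 \<le> k" shows "Sn k d dt a \<alpha> n z k = a n * z 1 + pn k dt \<alpha> n z + (\<Sum>i=2..k. z i ^ d)"
  using assms unfolding Sn_def by auto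

lemma Sn_in_Ck: "2 \<le> k \<Longrightarrow> Sn k d dt a \<alpha> n z \<in> Ck k"
  unfolding Ck_def Sn_def by auto

lemma Scomp_in_Ck: "2 \<le> k \<Longrightarrow> z \<in> Ck k \<Longrightarrow> Scomp k d dt a \<alpha> n z \<in> Ck k"
  by (induction n) (auto simp: Sn_in_Ck)

lemma pn_cong:
  assumes "\<And>j. j \<in> {2..k} \<Longrightarrow> z j = w j"
  shows "pn k dt \<alpha> n z = pn k dt \<alpha> n w"
  unfolding pn_def using assms by (intro sum.cong refl arg_cong2[where f="(*)"] prod.cong) auto

definition Sn_inv_tail :: "nat \<Rightarrow> nat \<Rightarrow> (nat \<Rightarrow> complex) \<Rightarrow> nat \<Rightarrow> complex" where
  "Sn_inv_tail k d w = (\<lambda>j. if j \<in> {2..k-1} then w (j-1) else if j = k then w (k-1) - w 1 ^ (d-1) else 0)"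

definition Sn_inv :: "nat \<Rightarrow> nat \<Rightarrow> nat \<Rightarrow> (nat \<Rightarrow> complex) \<Rightarrow> (nat \<Rightarrow> (nat \<Rightarrow> nat) \<Rightarrow> complex)
    \<Rightarrow> nat \<Rightarrow> (nat \<Rightarrow> complex) \<Rightarrow> (nat \<Rightarrow> complex)" where
  "Sn_inv k d dt a \<alpha> n w = (let y = Sn_inv_tail k d w in
     y(1 := (w k - pn k dt \<alpha> n y - (\<Sum>i=2..k. y i ^ d)) / a n))"

lemma Sn_inv_in_Ck: "2 \<le> k \<Longrightarrow> Sn_inv k d dt a \<alpha> n w \<in> Ck k"
  unfolding Ck_def Sn_inv_def Sn_inv_tail_def Let_def by auto

lemma Sn_inv_tail_coord: "j \<noteq> 1 \<Longrightarrow> Sn_inv k d dt a \<alpha> n w j = Sn_inv_tail k d w j"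
  unfolding Sn_inv_def Let_def by simp

lemma Sn_inv_first_coord:
  "a n * Sn_inv k d dt a \<alpha> n w 1 =
     w k - pn k dt \<alpha> n (Sn_inv_tail k d w) - (\<Sum>i=2..k. Sn_inv_tail k d w i ^ d)" if "a n \<noteq> 0"
  using that unfolding Sn_inv_def Let_def by simp

lemma Sn_Sn_inv:
  assumes k: "3 \<le> k" and w: "w \<in> Ck k" and a: "a n \<noteq> 0"
  shows "Sn k d dt a \<alpha> n (Sn_inv k d dt a \<alpha> n w) = w"
proof
  fix j
  let ?z = "Sn_inv k d dt a \<alpha> n w" and ?y = "Sn_inv_tail k d w"
  have tail: "?z i = ?y i" if "i \<in> {2..k}" for i
    using that by (simp add: Sn_inv_tail_coord)
  have "pn k dt \<alpha> n ?z = pn k dt \<alpha> n ?y" by (rule pn_cong) (rule tail)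
  moreover have "(\<Sum>i=2..k. ?z i ^ d) = (\<Sum>i=2..k. ?y i ^ d)" using tail by simp
  ultimately have "Sn k d dt a \<alpha> n ?z k = w k"
    using Sn_inv_first_coord[of a n, OF a] by (simp add: Sn_last_coord[OF k])
  then show "Sn k d dt a \<alpha> n ?z j = w j"
    using k w unfolding Sn_def Ck_def by (auto simp: Sn_inv_def Sn_inv_tail_def Let_def)
qed

lemma inj_on_Sn:
  assumes k: "3 \<le> k" and a: "a n \<noteq> 0"
  shows "inj_on (Sn k d dt a \<alpha> n) (Ck k)"
proof
  fix z w assume z: "z \<in> Ck k" and w: "w \<in> Ck k" and eq: "Sn k d dt a \<alpha> n z = Sn k d dt a \<alpha> n w"
  have mid: "z j = w j" if "j \<in> {2..k-1}" for j
  proof -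
    have "j - 1 \<in> {1..k-2}" "j - 1 + 1 = j" using that by auto
    then show ?thesis using fun_cong[OF eq, of "j-1"] by (metis Sn_shift_coord)
  qed
  have "z k + z 2 ^ (d-1) = w k + w 2 ^ (d-1)"
    using fun_cong[OF eq, of "k-1"] by (simp only: Sn_penultimate_coord[OF k])
  moreover have "z 2 = w 2" using mid k by simp
  ultimately have "z k = w k" by simp
  with mid have tail: "z j = w j" if "j \<in> {2..k}" for j
    using that by (cases "j = k") auto
  have "pn k dt \<alpha> n z = pn k dt \<alpha> n w" by (rule pn_cong) (rule tail)
  moreover have "(\<Sum>i=2..k. z i ^ d) = (\<Sum>i=2..k. w i ^ d)" using tail by simp
  ultimately have "z 1 = w 1"
    using fun_cong[OF eq, of k] a by (simp add: Sn_last_coord[OF k])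
  show "z = w"
  proof
    fix j
    show "z j = w j"
    proof (cases "j \<in> {1..k}")
      case True
      then have "j = 1 \<or> j \<in> {2..k}" by auto
      with \<open>z 1 = w 1\<close> tail show ?thesis by auto
    next
      case False
      with z w show ?thesis unfolding Ck_def by auto
    qed
  qed
qed

lemma the_inv_into_Sn:
  assumes "3 \<le> k" "w \<in> Ck k" "a n \<noteq> 0"
  shows "the_inv_into (Ck k) (Sn k d dt a \<alpha> n) w = Sn_inv k d dt a \<alpha> n w"
  using assms by (intro the_inv_into_f_eq inj_on_Sn Sn_Sn_inv Sn_inv_in_Ck) auto

lemma Sinvcomp_in_Ck_and_Suc:
  assumes k: "3 \<le> k" and z: "z \<in> Ck k" and a: "\<And>n. 1 \<le> n \<Longrightarrow> a n \<noteq> 0"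
  shows "Sinvcomp k d dt a \<alpha> m z \<in> Ck k \<and>
    Sinvcomp k d dt a \<alpha> (Suc m) z = Sn_inv k d dt a \<alpha> (Suc m) (Sinvcomp k d dt a \<alpha> m z)"
proof (induction m)
  case 0
  then show ?case using z k a[of 1] by (simp add: the_inv_into_Sn)
next
  case (Suc m)
  then have "Sinvcomp k d dt a \<alpha> (Suc m) z \<in> Ck k" using k by (simp add: Sn_inv_in_Ck)
  then show ?case using k a[of "Suc (Suc m)"] by (simp add: the_inv_into_Sn)
qed

section \<open>Growth of \<open>S\<^sub>n\<close> near \<open>X\<^sup>+\<close>\<close>

lemma norm_pn_le:
  fixes s Mt :: real
  assumes z: "\<And>j. j \<in> {2..k} \<Longrightarrow> cmod (z j) \<le> s" and s: "1 \<le> s"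
    and \<alpha>: "\<And>i. i \<in> midx k dt \<Longrightarrow> cmod (\<alpha> n i) \<le> Mt"
  shows "cmod (pn k dt \<alpha> n z) \<le> real (card (midx k dt)) * Mt * s ^ dt"
proof -
  have monomial: "cmod (\<alpha> n i * (\<Prod>j=2..k. z j ^ i j)) \<le> Mt * s ^ dt" if i: "i \<in> midx k dt" for i
  proof -
    have "cmod (\<Prod>j=2..k. z j ^ i j) = (\<Prod>j=2..k. cmod (z j) ^ i j)"
      by (simp add: prod_norm[symmetric] norm_power)
    also have "\<dots> \<le> (\<Prod>j=2..k. s ^ i j)"
      by (intro prod_mono conjI zero_le_power norm_ge_zero power_mono z) auto
    also have "\<dots> = s ^ (\<Sum>j=2..k. i j)" by (simp add: power_sum)
    also have "\<dots> \<le> s ^ dt" using i s unfolding midx_def by (intro power_increasing) auto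
    finally have "cmod (\<Prod>j=2..k. z j ^ i j) \<le> s ^ dt" .
    moreover have "0 \<le> Mt" using \<alpha>[OF i] norm_ge_zero[of "\<alpha> n i"] by linarith
    ultimately show ?thesis using \<alpha>[OF i] by (simp add: norm_mult mult_mono)
  qed
  have "cmod (pn k dt \<alpha> n z) \<le> (\<Sum>i\<in>midx k dt. cmod (\<alpha> n i * (\<Prod>j=2..k. z j ^ i j)))"
    unfolding pn_def by (rule norm_sum)
  also have "\<dots> \<le> real (card (midx k dt)) * (Mt * s ^ dt)"
    by (rule sum_bounded_above) (rule monomial)
  finally show ?thesis by (simp add: mult.assoc)
qed

lemma sum_atLeastAtMost_split_last:
  assumes "m \<le> k" and "0 < (k::nat)"
  shows "(\<Sum>i=m..k. f i) = (\<Sum>i=m..k-1. f i) + (f k :: 'a::comm_monoid_add)"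
proof -
  have "{m..k} = insert k {m..k-1}" using assms by auto
  then show ?thesis using assms by (simp add: add.commute)
qed

lemma norm_Sn_coord_le:
  fixes r :: real
  assumes k: "3 \<le> k" and d: "2 \<le> d" and r: "1 \<le> r"
    and z: "\<And>i. i \<in> {2..k} \<Longrightarrow> cmod (z i) \<le> r" and j: "j \<in> {1..k-1}"
  shows "cmod (Sn k d dt a \<alpha> n z j) \<le> 2 * r ^ (d-1)"
proof -
  have r_le: "r \<le> r ^ (d-1)" using power_increasing[of 1 "d-1" r] r d by simp
  show ?thesis
  proof (cases "j = k - 1")
    case True
    have "cmod (z 2 ^ (d-1)) \<le> r ^ (d-1)"
      unfolding norm_power using z[of 2] k by (intro power_mono) auto
    then have "cmod (z k + z 2 ^ (d-1)) \<le> r + r ^ (d-1)"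
      using norm_triangle_ineq[of "z k" "z 2 ^ (d-1)"] z[of k] k by auto
    then show ?thesis using r_le unfolding True Sn_penultimate_coord[OF k] by simp
  next
    case False
    then have "j \<in> {1..k-2}" using j by auto
    moreover have "cmod (z (j+1)) \<le> r" using z[of "j+1"] j False by auto
    ultimately show ?thesis using r_le r by (simp add: Sn_shift_coord)
  qed
qed

lemma norm_sum_power_le:
  fixes \<rho> :: real
  assumes "\<And>i. i \<in> A \<Longrightarrow> cmod (z i) \<le> \<rho>"
  shows "cmod (\<Sum>i\<in>A. z i ^ d) \<le> real (card A) * \<rho> ^ d"
proof -
  have "cmod (\<Sum>i\<in>A. z i ^ d) \<le> (\<Sum>i\<in>A. cmod (z i) ^ d)"
    using norm_sum[of "\<lambda>i. z i ^ d"] by (simp add: norm_power)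
  also have "\<dots> \<le> (\<Sum>i\<in>A. \<rho> ^ d)" using assms by (intro sum_mono power_mono) auto
  finally show ?thesis by simp
qed

lemma norm_Sn_lower_order_terms_le:
  fixes Mt r :: real
  assumes k: "3 \<le> k" and d: "dt + 2 \<le> d" and r1: "1 \<le> r"
    and z: "\<And>j. j \<in> {1..k-1} \<Longrightarrow> real (k-1) * cmod (z j) \<le> r" and zk: "cmod (z k) \<le> r"
    and a: "cmod (a n) \<le> Mt" and \<alpha>: "\<And>i. i \<in> midx k dt \<Longrightarrow> cmod (\<alpha> n i) \<le> Mt"
  shows "cmod ((\<Sum>i=2..k-1. z i ^ d) + a n * z 1 + pn k dt \<alpha> n z)
    \<le> (real (k-1) - 1) / real (k-1) * r ^ d + (Mt + real (card (midx k dt)) * Mt) * r ^ (d-1)"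
proof -
  define K where "K = real (k-1)"
  define C where "C = real (card (midx k dt)) * Mt"
  have K2: "2 \<le> K" using k unfolding K_def by auto
  have Mt0: "0 \<le> Mt" using a norm_ge_zero[of "a n"] by linarith
  have r_le: "r \<le> r ^ (d-1)" using power_increasing[of 1 "d-1" r] r1 d by simp
  have z_small: "cmod (z j) \<le> r / K" if "j \<in> {1..k-1}" for j
    using z[OF that] K2 unfolding K_def[symmetric] by (simp add: field_simps)
  have "r / K \<le> r" using K2 r1 by (simp add: field_simps)
  have z_le: "cmod (z j) \<le> r" if "j \<in> {2..k}" for j
  proof (cases "j = k")
    case False
    with that have "j \<in> {1..k-1}" by auto
    with z_small[of j] \<open>r / K \<le> r\<close> show ?thesis by linarith
  qed (use zk in simp)
  have "cmod (\<Sum>i=2..k-1. z i ^ d) \<le> real (card {2..k-1}) * (r / K) ^ d"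
    by (rule norm_sum_power_le) (use z_small in auto)
  also have "\<dots> = (K - 1) * (r ^ d / K ^ d)"
    using k by (simp add: K_def power_divide)
  also have "\<dots> \<le> (K - 1) * (r ^ d / K)"
    using K2 r1 d power_increasing[of 1 d K] by (intro mult_left_mono divide_left_mono) auto
  finally have middle: "cmod (\<Sum>i=2..k-1. z i ^ d) \<le> (K - 1) / K * r ^ d" by simp
  have "1 \<in> {1..k-1}" using k by simp
  with z_small[of 1] \<open>r / K \<le> r\<close> r_le have "cmod (z 1) \<le> r ^ (d-1)" by linarith
  then have linear: "cmod (a n * z 1) \<le> Mt * r ^ (d-1)"
    unfolding norm_mult using a Mt0 by (intro mult_mono) auto
  have "cmod (pn k dt \<alpha> n z) \<le> C * r ^ dt"
    unfolding C_def by (rule norm_pn_le[of k z r dt \<alpha> n, OF z_le r1 \<alpha>])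
  also have "\<dots> \<le> C * r ^ (d-1)"
    using Mt0 r1 d unfolding C_def by (intro mult_left_mono power_increasing) auto
  finally have poly: "cmod (pn k dt \<alpha> n z) \<le> C * r ^ (d-1)" .
  have "cmod ((\<Sum>i=2..k-1. z i ^ d) + a n * z 1 + pn k dt \<alpha> n z)
      \<le> cmod (\<Sum>i=2..k-1. z i ^ d) + cmod (a n * z 1) + cmod (pn k dt \<alpha> n z)"
    by (meson norm_triangle_le order_refl add_mono)
  with middle linear poly show ?thesis
    unfolding K_def[symmetric] C_def[symmetric] by (simp add: algebra_simps)
qed

lemma norm_Sn_last_coord_ge:
  fixes Mt r :: real
  assumes k: "3 \<le> k" and d: "dt + 2 \<le> d"
    and r: "r = cmod (z k)" and r1: "1 \<le> r"
    and z: "\<And>j. j \<in> {1..k-1} \<Longrightarrow> real (k-1) * cmod (z j) \<le> r"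
    and r_coef: "2 * real (k-1) * (Mt + real (card (midx k dt)) * Mt) \<le> r"
    and a: "cmod (a n) \<le> Mt" and \<alpha>: "\<And>i. i \<in> midx k dt \<Longrightarrow> cmod (\<alpha> n i) \<le> Mt"
  shows "r ^ d / (2 * real (k-1)) \<le> cmod (Sn k d dt a \<alpha> n z k)"
proof -
  define K where "K = real (k-1)"
  define C where "C = real (card (midx k dt)) * Mt"
  let ?lower = "(\<Sum>i=2..k-1. z i ^ d) + a n * z 1 + pn k dt \<alpha> n z"
  have K2: "2 \<le> K" using k unfolding K_def by auto
  have "d = Suc (d-1)" using d by simp
  then have rd: "r ^ d = r * r ^ (d-1)" by (metis power_Suc)
  have zk: "cmod (z k) \<le> r" using r by simp
  have "Mt + C \<le> r / (2 * K)" using r_coef K2 unfolding K_def[symmetric] C_def[symmetric]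
    by (simp add: field_simps)
  then have "(Mt + C) * r ^ (d-1) \<le> r / (2 * K) * r ^ (d-1)"
    using r1 by (intro mult_right_mono) auto
  then have "cmod ?lower \<le> (K - 1) / K * r ^ d + r ^ d / (2 * K)"
    using norm_Sn_lower_order_terms_le[where a=a and n=n and \<alpha>=\<alpha> and z=z and r=r and Mt=Mt,
        OF k d r1 z zk a \<alpha>]
    unfolding K_def[symmetric] C_def[symmetric] by (simp add: rd)
  moreover have "Sn k d dt a \<alpha> n z k = z k ^ d + ?lower"
    using sum_atLeastAtMost_split_last[of 2 k "\<lambda>i. z i ^ d"] k by (simp add: Sn_last_coord algebra_simps)
  then have "cmod (z k ^ d) - cmod ?lower \<le> cmod (Sn k d dt a \<alpha> n z k)"
    by (simp add: norm_diff_ineq)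
  moreover have "cmod (z k ^ d) = r ^ d" using r by (simp add: norm_power)
  moreover have "r ^ d - (K - 1) / K * r ^ d - r ^ d / (2 * K) = r ^ d / (2 * K)"
    using K2 by (simp add: field_simps)
  ultimately show ?thesis unfolding K_def by linarith
qed

lemma Sn_escape_step:
  fixes Mt R :: real
  assumes k: "3 \<le> k" and d: "dt + 2 \<le> d"
    and z: "z \<in> escape_region k k (real (k-1)) R" and R1: "1 \<le> R"
    and R_coef: "2 * real (k-1) * (Mt + real (card (midx k dt)) * Mt) \<le> R"
    and R_K: "4 * real (k-1) ^ 2 \<le> R"
    and a: "cmod (a n) \<le> Mt" and \<alpha>: "\<And>i. i \<in> midx k dt \<Longrightarrow> cmod (\<alpha> n i) \<le> Mt"
  shows "2 * cmod (z k) \<le> cmod (Sn k d dt a \<alpha> n z k) \<and>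
    (\<forall>j\<in>{1..k}-{k}. cmod (Sn k d dt a \<alpha> n z j)
       \<le> 4 * real (k-1) / cmod (z k) * cmod (Sn k d dt a \<alpha> n z k))"
proof -
  define K where "K = real (k-1)"
  define r where "r = cmod (z k)"
  let ?w = "Sn k d dt a \<alpha> n z"
  have K2: "2 \<le> K" using k unfolding K_def by auto
  have dom: "K * cmod (z j) \<le> r" if "j \<in> {1..k-1}" for j
    using z that unfolding escape_region_def K_def r_def by auto
  have "R \<le> r" using z unfolding escape_region_def r_def by simp
  then have r1: "1 \<le> r" using R1 by linarith
  have "2 * real (k-1) * (Mt + real (card (midx k dt)) * Mt) \<le> r"
    using R_coef \<open>R \<le> r\<close> by linarith
  from norm_Sn_last_coord_ge[where a=a and n=n and \<alpha>=\<alpha> and z=z and r=r and Mt=Mt,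
      OF k d r_def r1 dom[unfolded K_def] this a \<alpha>]
  have last: "r ^ d / (2 * K) \<le> cmod (?w k)" unfolding K_def .
  have z_le: "cmod (z i) \<le> r" if "i \<in> {2..k}" for i
    using escape_region_coord_le[OF z _, of i] that K2 unfolding K_def r_def by auto
  have other: "cmod (?w j) \<le> 2 * r ^ (d-1)" if "j \<in> {1..k}-{k}" for j
    using that d by (intro norm_Sn_coord_le[OF k _ r1 z_le]) auto
  have "d = Suc (d-1)" using d by simp
  then have rd: "r ^ d = r * r ^ (d-1)" by (metis power_Suc)
  have "4 * K \<le> r ^ (d-1)"
  proof -
    have "4 * K \<le> 4 * K ^ 2" using K2 by (simp add: power2_eq_square)
    also have "\<dots> \<le> r" using R_K \<open>R \<le> r\<close> unfolding K_def by linarith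
    also have "\<dots> \<le> r ^ (d-1)" using power_increasing[of 1 "d-1" r] r1 d by simp
    finally show ?thesis .
  qed
  then have "2 * r \<le> r ^ d / (2 * K)"
    using K2 r1 mult_right_mono[of "4 * K" "r ^ (d-1)" r] by (simp add: rd field_simps)
  moreover have "cmod (?w j) \<le> 4 * K / r * cmod (?w k)" if "j \<in> {1..k}-{k}" for j
  proof -
    have "2 * r ^ (d-1) = 4 * K / r * (r ^ d / (2 * K))" using K2 r1 by (simp add: rd field_simps)
    also have "\<dots> \<le> 4 * K / r * cmod (?w k)" using last K2 r1 by (intro mult_left_mono) auto
    finally show ?thesis using other[OF that] by linarith
  qed
  ultimately show ?thesis using last unfolding r_def K_def by auto
qed

section \<open>Growth of \<open>S\<^sub>n\<^sup>-\<^sup>1\<close> near \<open>X\<^sup>-\<close>\<close>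

lemma norm_Sn_inv_tail_bounds:
  fixes r :: real
  assumes k: "3 \<le> k" and d: "3 \<le> d" and r: "r = cmod (z 1)" and r2: "2 \<le> r"
    and z: "\<And>j. j \<in> {2..k} \<Longrightarrow> cmod (z j) \<le> r"
  shows "\<forall>j\<in>{2..k-1}. cmod (Sn_inv_tail k d z j) \<le> r"
    and "\<forall>j\<in>{2..k}. cmod (Sn_inv_tail k d z j) \<le> 2 * r ^ (d-1)"
    and "r ^ (d-1) / 2 \<le> cmod (Sn_inv_tail k d z k)"
proof -
  have z_le: "cmod (z j) \<le> r" if "j \<in> {1..k}" for j
    using that r z by (cases "j = 1") auto
  show middle: "\<forall>j\<in>{2..k-1}. cmod (Sn_inv_tail k d z j) \<le> r"
  proof
    fix j assume "j \<in> {2..k-1}"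
    then have "Sn_inv_tail k d z j = z (j-1)" and "j - 1 \<in> {1..k}"
      unfolding Sn_inv_tail_def by auto
    then show "cmod (Sn_inv_tail k d z j) \<le> r" using z_le[of "j-1"] by simp
  qed
  have last: "Sn_inv_tail k d z k = z (k-1) - z 1 ^ (d-1)"
    using k unfolding Sn_inv_tail_def by auto
  have zk1: "cmod (z (k-1)) \<le> r" using z_le k by auto
  have pow: "cmod (z 1 ^ (d-1)) = r ^ (d-1)" using r by (simp add: norm_power)
  have "r \<le> r ^ (d-2)" using power_increasing[of 1 "d-2" r] r2 d by simp
  moreover have "d - 1 = Suc (d-2)" using d by simp
  then have "r ^ (d-1) = r * r ^ (d-2)" by (metis power_Suc)
  ultimately have "2 * r \<le> r ^ (d-1)" using r2 mult_right_mono[of 2 r "r ^ (d-2)"] by simp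
  then have last_le: "cmod (Sn_inv_tail k d z k) \<le> 2 * r ^ (d-1)"
    and last_ge: "r ^ (d-1) / 2 \<le> cmod (Sn_inv_tail k d z k)"
    using norm_triangle_ineq4[of "z (k-1)" "z 1 ^ (d-1)"] norm_triangle_ineq2[of "z 1 ^ (d-1)" "z (k-1)"]
      zk1 pow unfolding last by (simp_all add: norm_minus_commute)
  show "r ^ (d-1) / 2 \<le> cmod (Sn_inv_tail k d z k)" by (rule last_ge)
  show "\<forall>j\<in>{2..k}. cmod (Sn_inv_tail k d z j) \<le> 2 * r ^ (d-1)"
  proof
    fix j assume j: "j \<in> {2..k}"
    show "cmod (Sn_inv_tail k d z j) \<le> 2 * r ^ (d-1)"
    proof (cases "j = k")
      case False
      with j have "j \<in> {2..k-1}" by auto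
      with middle \<open>2 * r \<le> r ^ (d-1)\<close> r2 show ?thesis by fastforce
    qed (use last_le in simp)
  qed
qed

lemma norm_Sn_inv_lower_order_terms_le:
  fixes Mt r :: real
  assumes k: "3 \<le> k" and d: "dt + 2 \<le> d" and dt: "1 \<le> dt"
    and r: "r = cmod (z 1)" and r2: "2 \<le> r" and z: "\<And>j. j \<in> {2..k} \<Longrightarrow> cmod (z j) \<le> r"
    and Mt: "0 \<le> Mt" and \<alpha>: "\<And>i. i \<in> midx k dt \<Longrightarrow> cmod (\<alpha> n i) \<le> Mt"
  shows "cmod (z k - pn k dt \<alpha> n (Sn_inv_tail k d z) - (\<Sum>i=2..k-1. Sn_inv_tail k d z i ^ d))
    \<le> (real (k-1) + 1 + real (card (midx k dt)) * Mt) * (2 * r ^ (d-1)) ^ (d-1)"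
proof -
  define s where "s = 2 * r ^ (d-1)"
  define y where "y = Sn_inv_tail k d z"
  have d3: "3 \<le> d" using d dt by simp
  note tail = norm_Sn_inv_tail_bounds[where z=z, OF k d3 r r2 z, folded y_def s_def]
  have "r \<le> r ^ (d-1)" using power_increasing[of 1 "d-1" r] r2 d by simp
  then have rs: "r \<le> s" and s1: "1 \<le> s" using r2 unfolding s_def by linarith+
  have s_pow: "s \<le> s ^ (d-1)" using power_increasing[of 1 "d-1" s] s1 d by simp
  have r_pow: "r ^ d \<le> s ^ (d-1)"
  proof -
    have "2 * (d-1) \<le> (d-1) * (d-1)" using d3 by (intro mult_le_mono1) auto
    then have "d \<le> (d-1) * (d-1)" using d3 by linarith
    then have "r ^ d \<le> (r ^ (d-1)) ^ (d-1)"
      using power_increasing[of d "(d-1) * (d-1)" r] r2 by (simp add: power_mult)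
    also have "\<dots> \<le> s ^ (d-1)" using r2 unfolding s_def by (intro power_mono) auto
    finally show ?thesis .
  qed
  have "cmod (\<Sum>i=2..k-1. y i ^ d) \<le> real (card {2..k-1}) * r ^ d"
    by (rule norm_sum_power_le) (use tail(1) in auto)
  also have "\<dots> \<le> real (k-1) * s ^ (d-1)"
    using r_pow r2 k by (intro mult_mono) auto
  finally have middle: "cmod (\<Sum>i=2..k-1. y i ^ d) \<le> real (k-1) * s ^ (d-1)" .
  have "y j \<in> cball 0 s" if "j \<in> {2..k}" for j using tail(2) that unfolding s_def by auto
  then have "cmod (pn k dt \<alpha> n y) \<le> real (card (midx k dt)) * Mt * s ^ dt"
    by (intro norm_pn_le[where z=y and \<alpha>=\<alpha> and n=n, OF _ s1 \<alpha>]) auto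
  also have "\<dots> \<le> real (card (midx k dt)) * Mt * s ^ (d-1)"
    using Mt s1 d by (intro mult_left_mono power_increasing) auto
  finally have poly: "cmod (pn k dt \<alpha> n y) \<le> real (card (midx k dt)) * Mt * s ^ (d-1)" .
  have "cmod (z k) \<le> s ^ (d-1)" using z[of k] k rs s_pow by auto
  moreover have "cmod (z k - pn k dt \<alpha> n y - (\<Sum>i=2..k-1. y i ^ d))
      \<le> cmod (z k) + cmod (pn k dt \<alpha> n y) + cmod (\<Sum>i=2..k-1. y i ^ d)"
    by (meson norm_triangle_ineq4 order_trans add_mono order_refl)
  ultimately show ?thesis
    using middle poly unfolding y_def[symmetric] s_def[symmetric] by (simp add: algebra_simps)
qed

lemma norm_Sn_inv_first_coord_ge:
  fixes Mt r :: real
  assumes k: "3 \<le> k" and d: "dt + 2 \<le> d" and dt: "1 \<le> dt"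
    and r: "r = cmod (z 1)" and r2: "2 \<le> r" and z: "\<And>j. j \<in> {2..k} \<Longrightarrow> cmod (z j) \<le> r"
    and r_coef: "2 * 4 ^ d * (real (k-1) + 1 + real (card (midx k dt)) * Mt) \<le> r"
    and a: "cmod (a n) \<le> Mt" and a0: "a n \<noteq> 0" and \<alpha>: "\<And>i. i \<in> midx k dt \<Longrightarrow> cmod (\<alpha> n i) \<le> Mt"
  shows "(2 * r ^ (d-1)) ^ d / (2 * 4 ^ d * Mt) \<le> cmod (Sn_inv k d dt a \<alpha> n z 1)"
proof -
  define K where "K = real (k-1) + 1 + real (card (midx k dt)) * Mt"
  define s where "s = 2 * r ^ (d-1)"
  define y where "y = Sn_inv_tail k d z"
  let ?rest = "z k - pn k dt \<alpha> n y - (\<Sum>i=2..k-1. y i ^ d)"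
  let ?w1 = "Sn_inv k d dt a \<alpha> n z 1"
  have Mt0: "0 < Mt" by (rule order.strict_trans2[OF _ a]) (simp add: a0)
  have rest: "cmod ?rest \<le> K * s ^ (d-1)"
    using norm_Sn_inv_lower_order_terms_le[where z=z and \<alpha>=\<alpha> and n=n, OF k d dt r r2 z _ \<alpha>] Mt0
    unfolding K_def s_def y_def by simp
  have "r \<le> r ^ (d-1)" using power_increasing[of 1 "d-1" r] r2 d by simp
  then have rs: "r \<le> s" and s1: "1 \<le> s" using r2 unfolding s_def by linarith+
  have "s / 4 \<le> cmod (y k)"
    using norm_Sn_inv_tail_bounds(3)[where z=z, OF k _ r r2 z] d dt unfolding s_def y_def by simp
  then have lead: "s ^ d / 4 ^ d \<le> cmod (y k ^ d)"
    using power_mono[of "s / 4" "cmod (y k)" d] s1 by (simp add: norm_power power_divide)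
  have "d = Suc (d-1)" using d by simp
  then have sd: "s ^ d = s * s ^ (d-1)" by (metis power_Suc)
  have "2 * 4 ^ d * K * s ^ (d-1) \<le> s * s ^ (d-1)"
    using r_coef rs s1 unfolding K_def by (intro mult_right_mono) auto
  then have gap: "K * s ^ (d-1) \<le> s ^ d / (2 * 4 ^ d)" by (simp add: sd field_simps)
  have "a n * ?w1 = - (y k ^ d) + ?rest"
    using Sn_inv_first_coord[where a=a and n=n and k=k and d=d and dt=dt and \<alpha>=\<alpha> and w=z, OF a0]
      sum_atLeastAtMost_split_last[of 2 k "\<lambda>i. y i ^ d"] k
    unfolding y_def by (simp add: algebra_simps)
  then have "cmod (y k ^ d) - cmod ?rest \<le> cmod (a n) * cmod ?w1"
    by (metis norm_diff_ineq norm_minus_cancel norm_mult)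
  moreover have "cmod (a n) * cmod ?w1 \<le> Mt * cmod ?w1" using a by (intro mult_right_mono) auto
  moreover have "s ^ d / 4 ^ d = s ^ d / (2 * 4 ^ d) + s ^ d / (2 * 4 ^ d)" by simp
  ultimately have "s ^ d / (2 * 4 ^ d) \<le> Mt * cmod ?w1"
    using lead rest gap by linarith
  then have "s ^ d / (2 * 4 ^ d) / Mt \<le> cmod ?w1"
    using Mt0 by (simp add: pos_divide_le_eq mult_ac)
  then show ?thesis unfolding s_def by simp
qed

lemma Sn_inv_escape_step:
  fixes Mt R :: real
  assumes k: "3 \<le> k" and d: "dt + 2 \<le> d" and dt: "1 \<le> dt"
    and z: "z \<in> escape_region k 1 (real (k-1)) R" and R2: "2 \<le> R"
    and R_coef: "2 * 4 ^ d * (real (k-1) + 1 + real (card (midx k dt)) * Mt) \<le> R"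
    and R_B: "real (k-1) * (2 * 4 ^ d * Mt) \<le> R"
    and a: "cmod (a n) \<le> Mt" and a0: "a n \<noteq> 0" and \<alpha>: "\<And>i. i \<in> midx k dt \<Longrightarrow> cmod (\<alpha> n i) \<le> Mt"
  shows "2 * cmod (z 1) \<le> cmod (Sn_inv k d dt a \<alpha> n z 1) \<and>
    (\<forall>j\<in>{1..k}-{1}. cmod (Sn_inv k d dt a \<alpha> n z j)
       \<le> 2 * 4 ^ d * Mt / cmod (z 1) * cmod (Sn_inv k d dt a \<alpha> n z 1))"
proof -
  define r where "r = cmod (z 1)"
  define s where "s = 2 * r ^ (d-1)"
  define B where "B = 2 * 4 ^ d * Mt"
  let ?w = "Sn_inv k d dt a \<alpha> n z"
  have K1: "1 \<le> real (k-1)" using k by simp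
  have Mt0: "0 < Mt" by (rule order.strict_trans2[OF _ a]) (simp add: a0)
  then have B0: "0 < B" unfolding B_def by simp
  have "R \<le> r" using z unfolding escape_region_def r_def by simp
  then have r2: "2 \<le> r" using R2 by linarith
  have z_le: "cmod (z j) \<le> r" if "j \<in> {2..k}" for j
    using escape_region_coord_le[OF z K1, of j] that unfolding r_def by auto
  have "r \<le> r ^ (d-1)" using power_increasing[of 1 "d-1" r] r2 d by simp
  then have rs: "r \<le> s" and s1: "1 \<le> s" using r2 unfolding s_def by linarith+
  have s_pow: "s \<le> s ^ (d-1)" using power_increasing[of 1 "d-1" s] s1 d by simp
  have "d = Suc (d-1)" using d by simp
  then have sd: "s ^ d = s * s ^ (d-1)" by (metis power_Suc)
  have "2 * 4 ^ d * (real (k-1) + 1 + real (card (midx k dt)) * Mt) \<le> r"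
    using R_coef \<open>R \<le> r\<close> by linarith
  from norm_Sn_inv_first_coord_ge[where a=a and n=n and \<alpha>=\<alpha> and z=z and r=r and Mt=Mt,
      OF k d dt r_def r2 z_le this a a0 \<alpha>]
  have first: "s ^ d / B \<le> cmod (?w 1)" unfolding s_def B_def .
  have B_le: "B \<le> s ^ (d-1)"
    using R_B \<open>R \<le> r\<close> rs s_pow mult_right_mono[OF K1, of B] B0 unfolding B_def by linarith
  have "2 * r \<le> s" using \<open>r \<le> r ^ (d-1)\<close> unfolding s_def by simp
  also have "s \<le> s ^ d / B"
    using B_le s1 B0 mult_left_mono[of B "s ^ (d-1)" s] by (simp add: sd field_simps)
  finally have doubling: "2 * r \<le> cmod (?w 1)" using first by linarith
  have "cmod (?w j) \<le> B / r * cmod (?w 1)" if "j \<in> {1..k}-{1}" for j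
  proof -
    have "cmod (?w j) = cmod (Sn_inv_tail k d z j)" using that by (simp add: Sn_inv_tail_coord)
    also have "\<dots> \<le> s"
    proof -
      have "3 \<le> d" "j \<in> {2..k}" using d dt that by auto
      with norm_Sn_inv_tail_bounds(2)[where z=z, OF k _ r_def r2 z_le] show ?thesis
        unfolding s_def by blast
    qed
    also have "\<dots> \<le> B / r * (s ^ d / B)"
      using rs s_pow s1 B0 r2 mult_left_mono[of r "s ^ (d-1)" s] by (simp add: sd field_simps)
    also have "\<dots> \<le> B / r * cmod (?w 1)" using first B0 r2 by (intro mult_left_mono) auto
    finally show ?thesis .
  qed
  with doubling show ?thesis unfolding r_def B_def by blast
qed

section \<open>The basins \<open>U\<^sup>+\<close> and \<open>U\<^sup>-\<close>\<close>

lemma Uplus_eq_Union_interior_VRk: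
  fixes Mt R :: real
  assumes k: "3 \<le> k" and d: "dt + 2 \<le> d"
    and a: "\<And>n. 1 \<le> n \<Longrightarrow> cmod (a n) \<le> Mt"
    and \<alpha>: "\<And>n i. 1 \<le> n \<Longrightarrow> i \<in> midx k dt \<Longrightarrow> cmod (\<alpha> n i) \<le> Mt"
    and R1: "1 \<le> R" and R_coef: "2 * real (k-1) * (Mt + real (card (midx k dt)) * Mt) \<le> R"
    and R_K: "4 * real (k-1) ^ 2 \<le> R"
  shows "Uplus k d dt a \<alpha> = (\<Union>n\<in>{1..}. {z \<in> Ck k. Scomp k d dt a \<alpha> n z \<in> intCk k (VRk k R)})"
  unfolding Uplus_def Xplus_def VRk_eq_escape_region
proof (rule basin_eq_Union_interior_escape_region[where F="Sn k d dt a \<alpha>" and B="4 * real (k-1)"])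
  show "real (k-1) * (4 * real (k-1)) \<le> R" using R_K by (simp add: power2_eq_square)
  show "\<And>n z. z \<in> escape_region k k (real (k-1)) R \<Longrightarrow>
      2 * cmod (z k) \<le> cmod (Sn k d dt a \<alpha> (Suc n) z k) \<and>
      (\<forall>j\<in>{1..k}-{k}. cmod (Sn k d dt a \<alpha> (Suc n) z j)
         \<le> 4 * real (k-1) / cmod (z k) * cmod (Sn k d dt a \<alpha> (Suc n) z k))"
    using a \<alpha> by (intro Sn_escape_step[OF k d _ R1 R_coef R_K]) auto
qed (use k R1 in \<open>auto simp: Scomp_in_Ck\<close>)

lemma Uminus_eq_Union_interior_VRminus:
  fixes Mt R :: real
  assumes k: "3 \<le> k" and d: "dt + 2 \<le> d" and dt: "1 \<le> dt"
    and a: "\<And>n. 1 \<le> n \<Longrightarrow> cmod (a n) \<le> Mt" and a0: "\<And>n. 1 \<le> n \<Longrightarrow> a n \<noteq> 0"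
    and \<alpha>: "\<And>n i. 1 \<le> n \<Longrightarrow> i \<in> midx k dt \<Longrightarrow> cmod (\<alpha> n i) \<le> Mt"
    and R2: "2 \<le> R" and R_coef: "2 * 4 ^ d * (real (k-1) + 1 + real (card (midx k dt)) * Mt) \<le> R"
    and R_B: "real (k-1) * (2 * 4 ^ d * Mt) \<le> R"
  shows "Uminus k d dt a \<alpha> = (\<Union>n\<in>{1..}. {z \<in> Ck k. Sinvcomp k d dt a \<alpha> n z \<in> intCk k (VRminus k R)})"
  unfolding Uminus_def Xminus_def VRminus_eq_escape_region
proof (rule basin_eq_Union_interior_escape_region[where F="Sn_inv k d dt a \<alpha>" and B="2 * 4 ^ d * Mt"])
  have "0 < Mt" by (rule order.strict_trans2[OF _ a[of 1]]) (simp_all add: a0)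
  then show "0 \<le> 2 * 4 ^ d * Mt" by simp
  show "\<And>n z. z \<in> Ck k \<Longrightarrow> Sinvcomp k d dt a \<alpha> n z \<in> Ck k"
    and "\<And>n z. z \<in> Ck k \<Longrightarrow> Sinvcomp k d dt a \<alpha> (Suc n) z = Sn_inv k d dt a \<alpha> (Suc n) (Sinvcomp k d dt a \<alpha> n z)"
    using Sinvcomp_in_Ck_and_Suc[where a=a and d=d and dt=dt and \<alpha>=\<alpha>, OF k _ a0] by blast+
  show "\<And>n z. z \<in> escape_region k 1 (real (k-1)) R \<Longrightarrow>
      2 * cmod (z 1) \<le> cmod (Sn_inv k d dt a \<alpha> (Suc n) z 1) \<and>
      (\<forall>j\<in>{1..k}-{1}. cmod (Sn_inv k d dt a \<alpha> (Suc n) z j)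
         \<le> 2 * 4 ^ d * Mt / cmod (z 1) * cmod (Sn_inv k d dt a \<alpha> (Suc n) z 1))"
    using a a0 \<alpha> by (intro Sn_inv_escape_step[OF k d dt _ R2 R_coef R_B]) auto
qed (use k R2 R_B in auto)

theorem lemma3p3:
  fixes k d dt :: nat and a :: "nat \<Rightarrow> complex" and \<alpha> :: "nat \<Rightarrow> (nat \<Rightarrow> nat) \<Rightarrow> complex"
  assumes "3 \<le> k"
    and "unif_bdd_weak_shift_like k dt a \<alpha>"
    and "dt + 2 \<le> d"
  shows "\<exists>R>1.
    Uplus k d dt a \<alpha> = (\<Union>n\<in>{1..}. {z \<in> Ck k. Scomp k d dt a \<alpha> n z \<in> intCk k (VRk k R)}) \<and>
    Uminus k d dt a \<alpha> = (\<Union>n\<in>{1..}. {z \<in> Ck k. Sinvcomp k d dt a \<alpha> n z \<in> intCk k (VRminus k R)})"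
proof -
  note k = assms(1) and d = assms(3)
  have dt: "1 \<le> dt" using assms(2) unfolding unif_bdd_weak_shift_like_def by simp
  obtain mt Mt :: real where "0 < mt" and bounds: "\<And>n. 1 \<le> n \<Longrightarrow>
      mt < cmod (a n) \<and> cmod (a n) < Mt \<and> (\<forall>i\<in>midx k dt. cmod (\<alpha> n i) < Mt)"
    using assms(2) unfolding unif_bdd_weak_shift_like_def by blast
  then have a: "\<And>n. 1 \<le> n \<Longrightarrow> cmod (a n) \<le> Mt" and a0: "\<And>n. 1 \<le> n \<Longrightarrow> a n \<noteq> 0"
    and \<alpha>: "\<And>n i. 1 \<le> n \<Longrightarrow> i \<in> midx k dt \<Longrightarrow> cmod (\<alpha> n i) \<le> Mt"
    by (fastforce dest: bounds)+
  have "0 \<le> Mt" using a[of 1] norm_ge_zero[of "a 1"] by linarith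
  define K where "K = real (k-1)"
  define C where "C = real (card (midx k dt)) * Mt"
  define R where "R = 2 + 4 * K ^ 2 + 2 * K * (Mt + C) + 2 * 4 ^ d * (K + 1 + C) + K * (2 * 4 ^ d * Mt)"
  have "0 \<le> K" "0 \<le> C" using \<open>0 \<le> Mt\<close> unfolding K_def C_def by simp_all
  then have "0 \<le> 4 * K ^ 2" "0 \<le> 2 * K * (Mt + C)" "0 \<le> 2 * 4 ^ d * (K + 1 + C)" "0 \<le> K * (2 * 4 ^ d * Mt)"
    using \<open>0 \<le> Mt\<close> by simp_all
  then have "1 < R" "2 \<le> R" "2 * K * (Mt + C) \<le> R" "4 * K ^ 2 \<le> R"
    "2 * 4 ^ d * (K + 1 + C) \<le> R" "K * (2 * 4 ^ d * Mt) \<le> R"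
    unfolding R_def by linarith+
  with Uplus_eq_Union_interior_VRk[where a=a and \<alpha>=\<alpha>, OF k d a \<alpha>]
    Uminus_eq_Union_interior_VRminus[where a=a and \<alpha>=\<alpha>, OF k d dt a a0 \<alpha>]
  show ?thesis unfolding K_def C_def by (intro exI[of _ R]) auto
qed

end
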